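(* Let $f,g:\mathbb{R}^n\to[0,+\infty)$ and $h_1,h_2:\mathbb{R}^n\to\mathbb{R}$, let $C\subseteq\mathbb{R}^n$ be closed and convex, $\Omega:=\{x:g(x)\neq0\}$, $C\cap\Omega\neq\emptyset$, and assume: $f$ is convex; $g$ is differentiable with locally Lipschitz gradient; $h_1$ is differentiable with locally Lipschitz gradient; $h_2$ is convex. Let $F(x)=f^2(x)/g(x)+h_1(x)-h_2(x)$ for $x\in\Omega\cap C$ and $F(x)=+\infty$ otherwise, let $x^0\in\mathrm{dom}F$, and assume that $\mathcal{X}_0:=\{x\in\mathrm{dom}F:F(x)\le F(x^0)\}$ is compact. Then $m_g:=\inf\{g(x):x\in\mathcal{X}_0\}>0$, and there exists $\Delta>0$ such that, with $\mathcal{X}_\Delta:=\{x\in\mathbb{R}^n:\mathrm{dist}(x,\mathcal{X}_0)\le\Delta\}$: (i) $g(x)\ge m_g/2$ for all $x\in\mathcal{X}_\Delta$; (ii) $f$, $g$, $f/g$, $\nabla g$ and $\nabla h_1$ are globally Lipschitz continuous on $\mathcal{X}_\Delta$; (iii) $M_{\nabla g}:=\sup\{\|\nabla g(x)\|_2:x\in\mathcal{X}_\Delta\}$, $M_g:=\sup\{g(x):x\in\mathcal{X}_\Delta\}$ and $M_{f/g}:=\sup\{f(x)/g(x):x\in\mathcal{X}_\Delta\}$ are finite.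
   Context: $\mathrm{dist}(x,S)=\inf\{\|x-y\|_2:y\in S\}$. *)

theory Defs
  imports "HOL-Analysis.Analysis"
begin

definition locally_lipschitz :: "('a::metric_space \<Rightarrow> 'b::metric_space) \<Rightarrow> bool" where
  "locally_lipschitz u \<longleftrightarrow> (\<forall>x. \<exists>e>0. \<exists>L. L-lipschitz_on (ball x e) u)"

definition lipschitz_on_set :: "'a::metric_space set \<Rightarrow> ('a \<Rightarrow> 'b::metric_space) \<Rightarrow> bool" where
  "lipschitz_on_set X u \<longleftrightarrow> (\<exists>L. L-lipschitz_on X u)"

definition Fobj :: "('a \<Rightarrow> real) \<Rightarrow> ('a \<Rightarrow> real) \<Rightarrow> ('a \<Rightarrow> real) \<Rightarrow> ('a \<Rightarrow> real)
    \<Rightarrow> 'a set \<Rightarrow> 'a \<Rightarrow> ereal" where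
  "Fobj f g h1 h2 C x =
     (if g x \<noteq> 0 \<and> x \<in> C then ereal ((f x)^2 / g x + h1 x - h2 x) else \<infinity>)"

definition domF :: "('a \<Rightarrow> ereal) \<Rightarrow> 'a set" where
  "domF F = {x. F x < \<infinity>}"

end

(* On the sublevel set X0 every point lies in dom F, so g > 0 there; being compact, X0 makes
   the continuous g attain a positive minimum m_g. Uniform continuity of g on a compact
   neighbourhood of X0 keeps g >= m_g/2 on a small closed Delta-neighbourhood X_Delta, which is
   again compact. Convex functions and functions with continuous gradient are locally Lipschitz,
   and locally Lipschitz maps are Lipschitz and bounded on compact sets; finally f/g is Lipschitz
   as a quotient of bounded Lipschitz functions whose denominator stays above m_g/2. *)

theory Submission
  imports Defs
begin

lemma locally_lipschitz_imp_continuous_on: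
  assumes "locally_lipschitz u"
  shows "continuous_on S u"
proof -
  have "isCont u x" for x
  proof -
    obtain e L where "e > 0" and "L-lipschitz_on (ball x e) u"
      using assms unfolding locally_lipschitz_def by blast
    then have "continuous_on (ball x e) u" by (simp add: lipschitz_on_continuous_on)
    with \<open>e > 0\<close> show ?thesis by (simp add: continuous_on_eq_continuous_at)
  qed
  then show ?thesis by (simp add: continuous_at_imp_continuous_on)
qed

lemma locally_lipschitz_imp_lipschitz_on_compact:
  assumes "locally_lipschitz u" and "compact K"
  shows "lipschitz_on_set K u"
proof -
  have "local_lipschitz {0::real} K (\<lambda>_. u)"
  proof (rule local_lipschitzI)
    fix t x assume "t \<in> {0::real}" "x \<in> K"
    obtain e L where e: "e > 0" and L: "L-lipschitz_on (ball x e) u"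
      using assms(1) unfolding locally_lipschitz_def by blast
    have "cball x (e/2) \<inter> K \<subseteq> ball x e" using e by auto
    then have "L-lipschitz_on (cball x (e/2) \<inter> K) u"
      using L lipschitz_on_subset by blast
    then show "\<exists>r>0. \<exists>L. \<forall>t\<in>cball t r \<inter> {0}. L-lipschitz_on (cball x r \<inter> K) u"
      using e by (intro exI[of _ "e/2"]) auto
  qed
  then obtain L where "L-lipschitz_on K u"
    by (rule local_lipschitz_compact_implies_lipschitz[OF _ assms(2)]) auto
  then show ?thesis unfolding lipschitz_on_set_def by blast
qed

lemma lipschitz_on_set_compact_imp_bounded:
  assumes "lipschitz_on_set K u" and "compact K"
  shows "bounded (u ` K)"
  using assms unfolding lipschitz_on_set_def
  by (metis compact_continuous_image compact_imp_bounded lipschitz_on_continuous_on)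

lemma convex_on_diff_le_bound:
  fixes f :: "'a::real_normed_vector \<Rightarrow> real"
  assumes f: "convex_on (cball x (2 * r)) f"
    and B: "\<And>u. u \<in> cball x (2 * r) \<Longrightarrow> \<bar>f u\<bar> \<le> B"
    and y: "y \<in> ball x r" and z: "z \<in> ball x r"
  shows "f z - f y \<le> 2 * B / r * dist z y"
proof (cases "y = z")
  case True
  then show ?thesis by simp
next
  case False
  define d where "d = dist z y"
  have d: "d > 0" using False by (simp add: d_def)
  have r: "r > 0" using y by (meson mem_ball zero_le_dist le_less_trans)
  \<comment> \<open>Follow the ray from y through z for a further length r: convexity along it bounds
    the slope of f on [y, z] by the oscillation 2B over the length r.\<close>
  define t where "t = d / (r + d)"
  define w where "w = z + (r / d) *\<^sub>R (z - y)"
  have "dist x w \<le> dist x z + norm ((r / d) *\<^sub>R (z - y))"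
    unfolding w_def by (metis dist_norm dist_triangle2 add_diff_cancel_left')
  also have "norm ((r / d) *\<^sub>R (z - y)) = r" using d r by (simp add: d_def dist_norm)
  finally have w: "w \<in> cball x (2 * r)" using z by simp
  have t: "0 \<le> t" "t \<le> 1" using d r by (auto simp: t_def)
  have "(1 - t) *\<^sub>R y + t *\<^sub>R w = z"
    using d r
    by (simp add: t_def w_def field_simps)
      (simp add: algebra_simps flip: scaleR_add_left add_divide_distrib)
  moreover have yc: "y \<in> cball x (2 * r)" using y r by simp
  ultimately have "f z \<le> (1 - t) * f y + t * f w"
    using convex_onD[OF f t yc w] by simp
  then have "f z - f y \<le> t * (f w - f y)" by (simp add: algebra_simps)
  also have "\<dots> \<le> t * (2 * B)" using B[OF w] B[OF yc] t by (intro mult_left_mono) auto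
  also have "\<dots> \<le> d / r * (2 * B)"
    using B[OF yc] d r by (intro mult_right_mono) (auto simp: t_def field_simps)
  finally show ?thesis by (simp add: d_def mult_ac)
qed

lemma convex_on_lipschitz_on_ball:
  fixes f :: "'a::real_normed_vector \<Rightarrow> real"
  assumes "convex_on (cball x (2 * r)) f"
    and B: "\<And>u. u \<in> cball x (2 * r) \<Longrightarrow> \<bar>f u\<bar> \<le> B"
    and "r > 0"
  shows "(2 * B / r)-lipschitz_on (ball x r) f"
proof (rule lipschitz_onI)
  fix y z assume "y \<in> ball x r" "z \<in> ball x r"
  then have "f z - f y \<le> 2 * B / r * dist z y" "f y - f z \<le> 2 * B / r * dist y z"
    using convex_on_diff_le_bound[OF assms(1) B] by blast+
  then show "dist (f y) (f z) \<le> 2 * B / r * dist y z"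
    by (simp add: dist_real_def dist_commute abs_le_iff)
next
  show "0 \<le> 2 * B / r" using B[of x] \<open>r > 0\<close> by simp
qed

lemma convex_on_imp_locally_lipschitz:
  fixes f :: "'a::euclidean_space \<Rightarrow> real"
  assumes "convex_on UNIV f"
  shows "locally_lipschitz f"
  unfolding locally_lipschitz_def
proof
  fix x
  have "continuous_on (cball x 2) f"
    using convex_on_continuous[OF open_UNIV assms] continuous_on_subset by blast
  then have "bounded (f ` cball x 2)"
    by (simp add: compact_continuous_image compact_imp_bounded)
  then obtain B where "\<forall>u\<in>cball x 2. \<bar>f u\<bar> \<le> B"
    unfolding bounded_real by blast
  then have "(2 * B)-lipschitz_on (ball x 1) f"
    using convex_on_lipschitz_on_ball[of x 1 f B] convex_on_subset[OF assms] by simp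
  then show "\<exists>e>0. \<exists>L. L-lipschitz_on (ball x e) f" by (intro exI[of _ 1]) auto
qed

lemma continuous_gradient_imp_locally_lipschitz:
  fixes g :: "'a::euclidean_space \<Rightarrow> real"
  assumes g: "\<And>x. (g has_derivative (\<lambda>v. Dg x \<bullet> v)) (at x)"
    and Dg: "continuous_on UNIV Dg"
  shows "locally_lipschitz g"
  unfolding locally_lipschitz_def
proof
  fix x
  have "bounded (Dg ` cball x 1)"
    using Dg compact_continuous_image compact_imp_bounded continuous_on_subset
    by (metis compact_cball top_greatest)
  then obtain B where B: "\<forall>u\<in>cball x 1. norm (Dg u) \<le> B"
    unfolding bounded_iff by blast
  have "B-lipschitz_on (ball x 1) g"
  proof (rule bounded_derivative_imp_lipschitz)
    show "(g has_derivative (\<lambda>v. Dg u \<bullet> v)) (at u within ball x 1)" for u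
      using g has_derivative_at_withinI by blast
    show "onorm (\<lambda>v. Dg u \<bullet> v) \<le> B" if "u \<in> ball x 1" for u
    proof -
      have "onorm (\<lambda>v. Dg u \<bullet> v) \<le> norm (Dg u)"
        using onorm_inner_right[OF bounded_linear_ident, of "Dg u"] by (simp add: onorm_id)
      also have "\<dots> \<le> B" using B that by auto
      finally show ?thesis .
    qed
    show "0 \<le> B" by (meson B centre_in_cball norm_ge_zero order_trans zero_le_one)
  qed simp
  then show "\<exists>e>0. \<exists>L. L-lipschitz_on (ball x e) g" by (intro exI[of _ 1]) auto
qed

lemma lipschitz_on_set_divide:
  fixes f g :: "'a::metric_space \<Rightarrow> real"
  assumes "lipschitz_on_set K f" and "lipschitz_on_set K g"
    and "bounded (f ` K)" and "bounded (g ` K)"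
    and g_ge: "\<forall>x\<in>K. c \<le> g x" and "c > 0"
  shows "lipschitz_on_set K (\<lambda>x. f x / g x)"
proof -
  obtain Lf Lg where Lf: "Lf-lipschitz_on K f" and Lg: "Lg-lipschitz_on K g"
    using assms(1,2) unfolding lipschitz_on_set_def by blast
  obtain Mf Mg where Mf: "\<forall>x\<in>K. \<bar>f x\<bar> \<le> Mf" and Mg: "\<forall>x\<in>K. \<bar>g x\<bar> \<le> Mg"
    using assms(3,4) unfolding bounded_real by blast
  define L where "L = (Lf * Mg + Mf * Lg) / c\<^sup>2"
  have cL: "c\<^sup>2 * L = Lf * Mg + Mf * Lg" using \<open>c > 0\<close> by (simp add: L_def)
  have L_nonneg: "0 \<le> L" if "x \<in> K" for x
  proof -
    have "0 \<le> Mf" "0 \<le> Mg" using Mf Mg that by (meson abs_ge_zero order_trans)+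
    then show ?thesis
      using lipschitz_on_nonneg[OF Lf] lipschitz_on_nonneg[OF Lg] by (simp add: L_def)
  qed
  have "dist (f x / g x) (f y / g y) \<le> L * dist x y" if x: "x \<in> K" and y: "y \<in> K" for x y
  proof -
    have gx: "c \<le> g x" and gy: "c \<le> g y" using g_ge x y by auto
    have "\<bar>f x * g y - f y * g x\<bar> = \<bar>(f x - f y) * g y + f y * (g y - g x)\<bar>"
      by (simp add: algebra_simps)
    also have "\<dots> \<le> \<bar>f x - f y\<bar> * \<bar>g y\<bar> + \<bar>f y\<bar> * \<bar>g y - g x\<bar>"
      by (metis abs_mult abs_triangle_ineq)
    also have "\<dots> \<le> (Lf * dist x y) * Mg + Mf * (Lg * dist x y)"
      using lipschitz_onD[OF Lf x y] lipschitz_onD[OF Lg y x] Mf Mg x y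
      by (intro add_mono mult_mono) (auto simp: dist_real_def dist_commute)
    finally have num: "\<bar>f x * g y - f y * g x\<bar> \<le> c\<^sup>2 * (L * dist x y)"
      unfolding mult.assoc[symmetric] cL by (simp add: algebra_simps)
    have den: "c\<^sup>2 \<le> g x * g y"
      using gx gy \<open>c > 0\<close> by (simp add: power2_eq_square mult_mono)
    have "c\<^sup>2 * (L * dist x y) \<le> g x * g y * (L * dist x y)"
      using den L_nonneg[OF x] by (simp add: mult_right_mono)
    with num have "\<bar>f x * g y - f y * g x\<bar> \<le> (L * dist x y) * (g x * g y)"
      by (simp add: mult.commute)
    moreover have "dist (f x / g x) (f y / g y) = \<bar>f x * g y - f y * g x\<bar> / (g x * g y)"
      using gx gy \<open>c > 0\<close> by (simp add: dist_real_def field_simps)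
    moreover have "g x * g y > 0" using gx gy \<open>c > 0\<close> by simp
    ultimately show ?thesis by (simp add: pos_divide_le_eq)
  qed
  then have "L-lipschitz_on K (\<lambda>x. f x / g x)" if "x \<in> K" for x
    using L_nonneg[OF that] by (rule lipschitz_onI)
  then show ?thesis
    unfolding lipschitz_on_set_def by (metis equals0I lipschitz_on_empty_iff order_refl)
qed

lemma Inf_image_compact_pos:
  fixes g :: "'a::topological_space \<Rightarrow> real"
  assumes "compact K" "K \<noteq> {}" "continuous_on K g" "\<forall>x\<in>K. 0 < g x"
  shows "0 < Inf (g ` K)" and "\<forall>x\<in>K. Inf (g ` K) \<le> g x"
proof -
  obtain y where "y \<in> K" and y_min: "\<forall>x\<in>K. g y \<le> g x"
    using continuous_attains_inf[OF assms(1-3)] by blast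
  then have "Inf (g ` K) = g y" by (intro cInf_eq_minimum) auto
  then show "0 < Inf (g ` K)" and "\<forall>x\<in>K. Inf (g ` K) \<le> g x"
    using assms(4) y_min \<open>y \<in> K\<close> by auto
qed

lemma continuous_lower_bound_near_compact:
  fixes g :: "'a::heine_borel \<Rightarrow> real"
  assumes g: "continuous_on UNIV g" and K: "compact K" "K \<noteq> {}"
    and m: "\<forall>x\<in>K. m \<le> g x" and "e > 0"
  obtains \<Delta> where "\<Delta> > 0" and "\<forall>x. infdist x K \<le> \<Delta> \<longrightarrow> m - e \<le> g x"
proof -
  define K1 where "K1 = {x. infdist x K \<le> 1}"
  have "compact K1" unfolding K1_def using compact_infdist_le[OF K(2,1)] by simp
  then have "uniformly_continuous_on K1 g"
    using g compact_uniformly_continuous continuous_on_subset by blast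
  then obtain d where "d > 0" and d: "\<forall>x\<in>K1. \<forall>x'\<in>K1. dist x' x < d \<longrightarrow> dist (g x') (g x) < e"
    unfolding uniformly_continuous_on_def using \<open>e > 0\<close> by blast
  have "m - e \<le> g x" if x: "infdist x K \<le> min 1 (d/2)" for x
  proof -
    obtain a where a: "a \<in> K" "infdist x K = dist x a"
      using infdist_attains_inf[OF compact_imp_closed[OF K(1)] K(2)] by blast
    then have "a \<in> K1" "x \<in> K1" "dist x a < d"
      using x \<open>d > 0\<close> by (auto simp: K1_def)
    then have "dist (g x) (g a) < e" using d by blast
    with m a show ?thesis by (force simp: dist_real_def)
  qed
  then show ?thesis using that[of "min 1 (d/2)"] \<open>d > 0\<close> by simp
qed

lemma domF_Fobj: "x \<in> domF (Fobj f g h1 h2 C) \<longleftrightarrow> g x \<noteq> 0 \<and> x \<in> C"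
  by (simp add: domF_def Fobj_def)

theorem lemma4p1:
  fixes f g h1 h2 :: "'a::euclidean_space \<Rightarrow> real"
    and Dg Dh1 :: "'a \<Rightarrow> 'a"
    and C :: "'a set" and x0 :: 'a
  assumes f_nonneg: "\<forall>x. f x \<ge> 0"
    and g_nonneg: "\<forall>x. g x \<ge> 0"
    and C_closed: "closed C" and C_convex: "convex C"
    and C_Omega: "C \<inter> {x. g x \<noteq> 0} \<noteq> {}"
    and f_convex: "convex_on UNIV f"
    and g_grad: "\<forall>x. (g has_derivative (\<lambda>v. Dg x \<bullet> v)) (at x)"
    and Dg_loclip: "locally_lipschitz Dg"
    and h1_grad: "\<forall>x. (h1 has_derivative (\<lambda>v. Dh1 x \<bullet> v)) (at x)"
    and Dh1_loclip: "locally_lipschitz Dh1"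
    and h2_convex: "convex_on UNIV h2"
    and x0_dom: "x0 \<in> domF (Fobj f g h1 h2 C)"
    and X0_compact: "compact {x \<in> domF (Fobj f g h1 h2 C).
                        Fobj f g h1 h2 C x \<le> Fobj f g h1 h2 C x0}"
  shows "let X0 = {x \<in> domF (Fobj f g h1 h2 C). Fobj f g h1 h2 C x \<le> Fobj f g h1 h2 C x0};
             mg = Inf (g ` X0)
         in mg > 0 \<and>
            (\<exists>\<Delta>>0. let XD = {x. infdist x X0 \<le> \<Delta>} in
               (\<forall>x\<in>XD. g x \<ge> mg / 2) \<and>
               lipschitz_on_set XD f \<and> lipschitz_on_set XD g \<and>
               lipschitz_on_set XD (\<lambda>x. f x / g x) \<and>
               lipschitz_on_set XD Dg \<and> lipschitz_on_set XD Dh1 \<and>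
               bdd_above ((\<lambda>x. norm (Dg x)) ` XD) \<and>
               bdd_above (g ` XD) \<and>
               bdd_above ((\<lambda>x. f x / g x) ` XD))"
proof -
  define X0 where "X0 = {x \<in> domF (Fobj f g h1 h2 C). Fobj f g h1 h2 C x \<le> Fobj f g h1 h2 C x0}"
  define mg where "mg = Inf (g ` X0)"
  have X0: "compact X0" "X0 \<noteq> {}" using X0_compact x0_dom by (auto simp: X0_def)
  have g_pos: "\<forall>x\<in>X0. 0 < g x" using g_nonneg by (auto simp: X0_def domF_Fobj less_le)
  have g_cont: "continuous_on UNIV g"
    by (intro continuous_at_imp_continuous_on ballI has_derivative_continuous[OF g_grad[rule_format]])
  have mg_pos: "0 < mg" and mg_le: "\<forall>x\<in>X0. mg \<le> g x"
    unfolding mg_def using Inf_image_compact_pos[OF X0 continuous_on_subset[OF g_cont] g_pos] by auto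
  obtain \<Delta> where "\<Delta> > 0" and g_ge: "\<forall>x. infdist x X0 \<le> \<Delta> \<longrightarrow> mg / 2 \<le> g x"
    using continuous_lower_bound_near_compact[OF g_cont X0 mg_le, of "mg / 2"] mg_pos by auto
  define XD where "XD = {x. infdist x X0 \<le> \<Delta>}"
  have "compact XD" unfolding XD_def using compact_infdist_le[OF X0(2,1) \<open>\<Delta> > 0\<close>] .
  then have lip: "lipschitz_on_set XD f" "lipschitz_on_set XD g"
      "lipschitz_on_set XD Dg" "lipschitz_on_set XD Dh1"
    using locally_lipschitz_imp_lipschitz_on_compact convex_on_imp_locally_lipschitz[OF f_convex]
      continuous_gradient_imp_locally_lipschitz[OF g_grad[rule_format]
        locally_lipschitz_imp_continuous_on[OF Dg_loclip]] Dg_loclip Dh1_loclip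
    by blast+
  then have bnd: "bounded (f ` XD)" "bounded (g ` XD)" "bounded (Dg ` XD)"
    using lipschitz_on_set_compact_imp_bounded \<open>compact XD\<close> by blast+
  have lip_quotient: "lipschitz_on_set XD (\<lambda>x. f x / g x)"
    using lipschitz_on_set_divide[OF lip(1,2) bnd(1,2), of "mg / 2"] g_ge mg_pos by (simp add: XD_def)
  then have "bounded ((\<lambda>x. f x / g x) ` XD)"
    using lipschitz_on_set_compact_imp_bounded \<open>compact XD\<close> by blast
  then show ?thesis
    unfolding Let_def X0_def[symmetric] mg_def[symmetric]
    using \<open>\<Delta> > 0\<close> mg_pos g_ge lip lip_quotient bnd
    by (intro conjI exI[of _ \<Delta>]) (auto simp: XD_def bounded_norm_comp bounded_imp_bdd_above)
qed

end
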